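(* Let $k\ge 0$. For every $k$-essential term $\alpha$ there exists a $k$-correct term $\alpha'$ equivalent to $\alpha$.
   Context: Let $\Sigma$ be a finite alphabet, $1\notin\Sigma$ a separator, $\Sigma_1=\Sigma\cup\{1\}$, $\mathrm{rk}(w)=|w|_1$ for $w\in\Sigma_1^*$; for $\mathrm{rk}(u)\ge j$, $u\odot_j v$ replaces the $j$-th occurrence of $1$ in $u$ by $v$; these operations extend elementwise to sets of words. Let $N$ be a set of nonterminals, each with a rank in $\mathbb{N}$. Terms (with ranks) are built from nonterminals (their rank), words of $\Sigma^*$ (rank $0$) and $1$ (rank $1$) by $(\alpha\cdot\beta)$ of rank $\mathrm{rk}\alpha+\mathrm{rk}\beta$ and $(\alpha\odot_j\beta)$, $j\ge1$, allowed when $\mathrm{rk}\alpha\ge j$, of rank $\mathrm{rk}\alpha+\mathrm{rk}\beta-1$. A term is $k$-correct if all its subterms have rank at most $k$; it is $k$-essential if its rank and the ranks of all nonterminals occurring in it are less than $k$. A ground multicontext is such an expression built additionally from ranked variables $x_1,\dots,x_t$ as leaves but without nonterminals; two ground multicontexts are equivalent if for every valuation $\mu$ assigning to each variable of rank $r$ a set of words of rank $r$, their values (with $\cdot$ as concatenation and $\odot_j$ as intercalation, elementwise) coincide. Two terms $\alpha_1,\alpha_2$ are equivalent if $\alpha_1=D_1[A_1,\dots,A_s]$ and $\alpha_2=D_2[A_1,\dots,A_s]$ for some nonterminals $A_1,\dots,A_s$ and equivalent ground multicontexts $D_1,D_2$ in variables $x_1,\dots,x_s$. *)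

theory Defs
  imports Main
begin

text \<open>Words over Sigma_1 = Sigma plus separator 1: we use 'a option lists, None = separator 1.\<close>

definition wrk :: "'a option list \<Rightarrow> nat" where
  "wrk w = length (filter (\<lambda>c. c = None) w)"

fun intercal :: "nat \<Rightarrow> 'a option list \<Rightarrow> 'a option list \<Rightarrow> 'a option list" where
  "intercal j [] v = []"
| "intercal j (Some a # u) v = Some a # intercal j u v"
| "intercal j (None # u) v = (if j = 1 then v @ u else None # intercal (j - 1) u v)"

definition set_concat :: "'a option list set \<Rightarrow> 'a option list set \<Rightarrow> 'a option list set" where
  "set_concat U V = {u @ v | u v. u \<in> U \<and> v \<in> V}"

definition set_intercal :: "nat \<Rightarrow> 'a option list set \<Rightarrow> 'a option list set \<Rightarrow> 'a option list set" where
  "set_intercal j U V = {intercal j u v | u v. u \<in> U \<and> v \<in> V}"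

text \<open>Expressions with leaves of type 'v: nonterminals (terms) or variables (ground multicontexts).
  Ins j a b stands for (a odot_j b).\<close>
datatype ('a, 'v) expr = Leaf 'v | Word "'a list" | One
  | Cat "('a, 'v) expr" "('a, 'v) expr" | Ins nat "('a, 'v) expr" "('a, 'v) expr"

fun rank :: "('v \<Rightarrow> nat) \<Rightarrow> ('a, 'v) expr \<Rightarrow> nat" where
  "rank \<rho> (Leaf x) = \<rho> x"
| "rank \<rho> (Word w) = 0"
| "rank \<rho> One = 1"
| "rank \<rho> (Cat a b) = rank \<rho> a + rank \<rho> b"
| "rank \<rho> (Ins j a b) = rank \<rho> a + rank \<rho> b - 1"

fun wf_expr :: "('v \<Rightarrow> nat) \<Rightarrow> ('a, 'v) expr \<Rightarrow> bool" where
  "wf_expr \<rho> (Leaf x) = True"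
| "wf_expr \<rho> (Word w) = True"
| "wf_expr \<rho> One = True"
| "wf_expr \<rho> (Cat a b) = (wf_expr \<rho> a \<and> wf_expr \<rho> b)"
| "wf_expr \<rho> (Ins j a b) = (1 \<le> j \<and> j \<le> rank \<rho> a \<and> wf_expr \<rho> a \<and> wf_expr \<rho> b)"

fun subexprs :: "('a, 'v) expr \<Rightarrow> ('a, 'v) expr set" where
  "subexprs (Cat a b) = insert (Cat a b) (subexprs a \<union> subexprs b)"
| "subexprs (Ins j a b) = insert (Ins j a b) (subexprs a \<union> subexprs b)"
| "subexprs e = {e}"

fun leaves :: "('a, 'v) expr \<Rightarrow> 'v set" where
  "leaves (Leaf x) = {x}"
| "leaves (Word w) = {}"
| "leaves One = {}"
| "leaves (Cat a b) = leaves a \<union> leaves b"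
| "leaves (Ins j a b) = leaves a \<union> leaves b"

definition k_correct :: "nat \<Rightarrow> ('v \<Rightarrow> nat) \<Rightarrow> ('a, 'v) expr \<Rightarrow> bool" where
  "k_correct k \<rho> t \<longleftrightarrow> (\<forall>s \<in> subexprs t. rank \<rho> s \<le> k)"

definition k_essential :: "nat \<Rightarrow> ('v \<Rightarrow> nat) \<Rightarrow> ('a, 'v) expr \<Rightarrow> bool" where
  "k_essential k \<rho> t \<longleftrightarrow> rank \<rho> t < k \<and> (\<forall>A \<in> leaves t. \<rho> A < k)"

fun val :: "('v \<Rightarrow> 'a option list set) \<Rightarrow> ('a, 'v) expr \<Rightarrow> 'a option list set" where
  "val \<mu> (Leaf x) = \<mu> x"
| "val \<mu> (Word w) = {map Some w}"
| "val \<mu> One = {[None]}"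
| "val \<mu> (Cat a b) = set_concat (val \<mu> a) (val \<mu> b)"
| "val \<mu> (Ins j a b) = set_intercal j (val \<mu> a) (val \<mu> b)"

definition mc_equiv :: "(nat \<Rightarrow> nat) \<Rightarrow> ('a, nat) expr \<Rightarrow> ('a, nat) expr \<Rightarrow> bool" where
  "mc_equiv \<rho>V D1 D2 \<longleftrightarrow>
     (\<forall>\<mu>. (\<forall>x. \<forall>w \<in> \<mu> x. wrk w = \<rho>V x) \<longrightarrow> val \<mu> D1 = val \<mu> D2)"

text \<open>Substituting nonterminals for variables: D[A_1,...,A_s] (variable i is x_(i+1)).\<close>
fun subst :: "(nat \<Rightarrow> 'n) \<Rightarrow> ('a, nat) expr \<Rightarrow> ('a, 'n) expr" where
  "subst \<sigma> (Leaf i) = Leaf (\<sigma> i)"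
| "subst \<sigma> (Word w) = Word w"
| "subst \<sigma> One = One"
| "subst \<sigma> (Cat a b) = Cat (subst \<sigma> a) (subst \<sigma> b)"
| "subst \<sigma> (Ins j a b) = Ins j (subst \<sigma> a) (subst \<sigma> b)"

definition term_equiv :: "('n \<Rightarrow> nat) \<Rightarrow> ('a, 'n) expr \<Rightarrow> ('a, 'n) expr \<Rightarrow> bool" where
  "term_equiv \<rho> \<alpha>1 \<alpha>2 \<longleftrightarrow>
     (\<exists>As :: 'n list. \<exists>D1 D2 :: ('a, nat) expr.
        leaves D1 \<subseteq> {..<length As} \<and> leaves D2 \<subseteq> {..<length As} \<and>
        wf_expr (\<lambda>i. \<rho> (As ! i)) D1 \<and> wf_expr (\<lambda>i. \<rho> (As ! i)) D2 \<and>
        mc_equiv (\<lambda>i. \<rho> (As ! i)) D1 D2 \<and>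
        subst (\<lambda>i. As ! i) D1 = \<alpha>1 \<and> subst (\<lambda>i. As ! i) D2 = \<alpha>2)"

end

theory Submission
  imports Defs "HOL-Library.Multiset"
begin

text \<open>Every term is equivalent to a normal form in which each nonterminal occurrence of rank r is
  applied to a list of r arguments, one for each of its separators. Such a normal form is
  converted back into a term by inserting the arguments of a nonterminal one at a time: first
  those of rank 0, then the others from right to left. The intermediate ranks are then bounded
  by the rank of the nonterminal or by the total rank of the arguments, so all subterms have
  rank at most k. After renaming every nonterminal occurrence to a fresh variable, the value of
  a multicontext on sets of words is the set of its values on single words, so it suffices to
  compare values on single words.\<close>

lemma wrk_simps [simp]:
  "wrk [] = 0" "wrk (Some a # u) = wrk u" "wrk (None # u) = Suc (wrk u)"
  "wrk (u @ v) = wrk u + wrk v" "wrk (map Some w) = 0" "wrk (replicate n None) = n"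
  by (auto simp: wrk_def filter_empty_conv)

lemma intercal_append:
  "1 \<le> j \<Longrightarrow> intercal j (u @ v) w =
    (if j \<le> wrk u then intercal j u w @ v else u @ intercal (j - wrk u) v w)"
proof (induction u arbitrary: j)
  case (Cons c u)
  then show ?case
    by (cases c) (auto simp: Cons.IH[of "j - 1"])
qed simp

text \<open>An entry \<open>None\<close>, or a missing entry, keeps the separator.\<close>
fun fill_seps :: "'a option list \<Rightarrow> 'a option list option list \<Rightarrow> 'a option list" where
  "fill_seps [] os = []"
| "fill_seps (Some a # w) os = Some a # fill_seps w os"
| "fill_seps (None # w) [] = None # fill_seps w []"
| "fill_seps (None # w) (oo # os) = (case oo of None \<Rightarrow> [None] | Some s \<Rightarrow> s) @ fill_seps w os"

fun intercal_list :: "nat \<Rightarrow> 'a option list list \<Rightarrow> 'a option list \<Rightarrow> 'a option list list" where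
  "intercal_list j [] v = []"
| "intercal_list j (s # ss) v =
    (if j \<le> wrk s then intercal j s v # ss else s # intercal_list (j - wrk s) ss v)"

lemma fill_seps_replicate_None: "fill_seps w (replicate n None) = w"
proof (induction w arbitrary: n)
  case (Cons c w)
  then show ?case
    by (cases c) (auto simp del: replicate.simps, cases n, auto simp: Cons.IH[of 0, simplified])
qed simp

lemma fill_seps_replicate_sep: "fill_seps w (replicate n (Some [None])) = w"
proof (induction w arbitrary: n)
  case (Cons c w)
  then show ?case
    by (cases c) (auto simp del: replicate.simps, cases n, auto simp: Cons.IH[of 0, simplified])
qed simp

lemma wrk_fill_seps:
  "length ss = wrk w \<Longrightarrow> wrk (fill_seps w (map Some ss)) = sum_list (map wrk ss)"
proof (induction w arbitrary: ss)
  case (Cons c w)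
  then show ?case by (cases c) (auto, cases ss, auto)
qed simp

lemma intercal_fill_seps:
  "length ss = wrk w \<Longrightarrow> 1 \<le> j \<Longrightarrow>
    intercal j (fill_seps w (map Some ss)) v = fill_seps w (map Some (intercal_list j ss v))"
proof (induction w arbitrary: ss j)
  case (Cons c w)
  show ?case
  proof (cases c)
    case None
    then obtain s ss' where ss: "ss = s # ss'"
      using Cons.prems by (cases ss) auto
    show ?thesis
      using Cons.prems Cons.IH[of ss' "j - wrk s"] by (auto simp: None ss intercal_append)
  qed (use Cons in auto)
qed simp

text \<open>Filling the separator of slot i is an intercalation, provided the slots filled before i
  contribute no separators.\<close>
lemma intercal_fill_seps_slot:
  assumes "length os = wrk w" "i < length os" "os ! i = None"
    "\<forall>s. Some s \<in> set (take i os) \<longrightarrow> wrk s = 0"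
  shows "intercal (Suc (length (filter (\<lambda>x. x = None) (take i os)))) (fill_seps w os) t =
    fill_seps w (os[i := Some t])"
  using assms
proof (induction w arbitrary: os i)
  case (Cons c w)
  show ?case
  proof (cases c)
    case None
    then obtain oo os' where os: "os = oo # os'"
      using Cons.prems by (cases os) auto
    show ?thesis
    proof (cases i)
      case 0
      then show ?thesis using Cons.prems by (simp add: None os)
    next
      case (Suc i')
      have IH: "intercal (Suc (length (filter (\<lambda>x. x = None) (take i' os')))) (fill_seps w os') t =
          fill_seps w (os'[i' := Some t])"
        using Cons.prems by (intro Cons.IH) (auto simp: os Suc None)
      show ?thesis
      proof (cases oo)
        case None
        then show ?thesis using IH by (simp add: \<open>c = None\<close> os Suc)
      next
        case (Some s)
        have "wrk s = 0" using Cons.prems by (auto simp: os Suc Some)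
        then show ?thesis using IH by (simp add: \<open>c = None\<close> os Suc Some intercal_append)
      qed
    qed
  next
    case (Some a)
    then show ?thesis using Cons.prems Cons.IH[of os i] by simp
  qed
qed simp

subsection \<open>Normal forms\<close>

datatype ('a, 'v) nform =
  NWord "'a list" | NSep | NCat "('a, 'v) nform" "('a, 'v) nform"
| NApp 'v "('a, 'v) nform list"

fun nrank :: "('a, 'v) nform \<Rightarrow> nat" where
  "nrank (NWord w) = 0"
| "nrank NSep = 1"
| "nrank (NCat a b) = nrank a + nrank b"
| "nrank (NApp x cs) = sum_list (map nrank cs)"

fun nwf :: "('v \<Rightarrow> nat) \<Rightarrow> ('a, 'v) nform \<Rightarrow> bool" where
  "nwf \<rho> (NWord w) = True"
| "nwf \<rho> NSep = True"
| "nwf \<rho> (NCat a b) = (nwf \<rho> a \<and> nwf \<rho> b)"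
| "nwf \<rho> (NApp x cs) = (length cs = \<rho> x \<and> (\<forall>c\<in>set cs. nwf \<rho> c))"

fun nleaves :: "('a, 'v) nform \<Rightarrow> 'v multiset" where
  "nleaves (NWord w) = {#}"
| "nleaves NSep = {#}"
| "nleaves (NCat a b) = nleaves a + nleaves b"
| "nleaves (NApp x cs) = add_mset x (sum_list (map nleaves cs))"

fun nval :: "('v \<Rightarrow> 'a option list) \<Rightarrow> ('a, 'v) nform \<Rightarrow> 'a option list" where
  "nval g (NWord w) = map Some w"
| "nval g NSep = [None]"
| "nval g (NCat a b) = nval g a @ nval g b"
| "nval g (NApp x cs) = fill_seps (g x) (map (\<lambda>c. Some (nval g c)) cs)"

fun nins :: "nat \<Rightarrow> ('a, 'v) nform \<Rightarrow> ('a, 'v) nform \<Rightarrow> ('a, 'v) nform"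
and nins_list :: "nat \<Rightarrow> ('a, 'v) nform list \<Rightarrow> ('a, 'v) nform \<Rightarrow> ('a, 'v) nform list" where
  "nins j (NWord w) t = NWord w"
| "nins j NSep t = t"
| "nins j (NCat a b) t =
    (if j \<le> nrank a then NCat (nins j a t) b else NCat a (nins (j - nrank a) b t))"
| "nins j (NApp x cs) t = NApp x (nins_list j cs t)"
| "nins_list j [] t = []"
| "nins_list j (c # cs) t =
    (if j \<le> nrank c then nins j c t # cs else c # nins_list (j - nrank c) cs t)"

lemma nval_NApp: "nval g (NApp x cs) = fill_seps (g x) (map Some (map (nval g) cs))"
  by (simp add: comp_def)

lemma nwf_nins:
  "nwf \<rho> n \<Longrightarrow> nwf \<rho> t \<Longrightarrow> nwf \<rho> (nins j n t)"
  "\<forall>c\<in>set cs. nwf \<rho> c \<Longrightarrow> nwf \<rho> t \<Longrightarrow>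
    (\<forall>c\<in>set (nins_list j cs t). nwf \<rho> c) \<and> length (nins_list j cs t) = length cs"
  by (induction j n t and j cs t rule: nins_nins_list.induct) auto

lemma nrank_nins:
  "1 \<le> j \<Longrightarrow> j \<le> nrank n \<Longrightarrow> nrank (nins j n t) = nrank n + nrank t - 1"
  "1 \<le> j \<Longrightarrow> j \<le> sum_list (map nrank cs) \<Longrightarrow>
    sum_list (map nrank (nins_list j cs t)) = sum_list (map nrank cs) + nrank t - 1"
  by (induction j n t and j cs t rule: nins_nins_list.induct) auto

lemma nleaves_nins:
  "1 \<le> j \<Longrightarrow> j \<le> nrank n \<Longrightarrow> nleaves (nins j n t) = nleaves n + nleaves t"
  "1 \<le> j \<Longrightarrow> j \<le> sum_list (map nrank cs) \<Longrightarrow>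
    sum_list (map nleaves (nins_list j cs t)) = sum_list (map nleaves cs) + nleaves t"
  by (induction j n t and j cs t rule: nins_nins_list.induct) auto

lemma wrk_nval:
  assumes "\<forall>x. wrk (g x) = \<rho> x"
  shows "nwf \<rho> n \<Longrightarrow> wrk (nval g n) = nrank n"
proof (induction n)
  case (NApp x cs)
  have "map wrk (map (nval g) cs) = map nrank cs"
    using NApp by auto
  moreover have "wrk (fill_seps (g x) (map Some (map (nval g) cs))) = sum_list (map wrk (map (nval g) cs))"
    using NApp.prems assms by (intro wrk_fill_seps) simp
  ultimately show ?case by (simp only: nval_NApp nrank.simps)
qed auto

lemma nval_nins:
  assumes g: "\<forall>x. wrk (g x) = \<rho> x"
  shows "nwf \<rho> n \<Longrightarrow> 1 \<le> j \<Longrightarrow> j \<le> nrank n \<Longrightarrow>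
      nval g (nins j n t) = intercal j (nval g n) (nval g t)"
    "\<forall>c\<in>set cs. nwf \<rho> c \<Longrightarrow> 1 \<le> j \<Longrightarrow>
      map (nval g) (nins_list j cs t) = intercal_list j (map (nval g) cs) (nval g t)"
proof (induction j n t and j cs t rule: nins_nins_list.induct)
  case (3 j a b t)
  then show ?case using wrk_nval[OF g, of a] by (auto simp: intercal_append)
next
  case (4 j x cs t)
  have "length (map (nval g) cs) = wrk (g x)" using 4 g by simp
  then show ?case using 4 by (simp only: nval_NApp nins.simps intercal_fill_seps) simp
next
  case (6 j c cs t)
  then show ?case using wrk_nval[OF g, of c] by auto
qed auto

fun wval :: "('v \<Rightarrow> 'a option list) \<Rightarrow> ('a, 'v) expr \<Rightarrow> 'a option list" where
  "wval g (Leaf x) = g x"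
| "wval g (Word w) = map Some w"
| "wval g One = [None]"
| "wval g (Cat a b) = wval g a @ wval g b"
| "wval g (Ins j a b) = intercal j (wval g a) (wval g b)"

fun leaf_list :: "('a, 'v) expr \<Rightarrow> 'v list" where
  "leaf_list (Leaf x) = [x]"
| "leaf_list (Word w) = []"
| "leaf_list One = []"
| "leaf_list (Cat a b) = leaf_list a @ leaf_list b"
| "leaf_list (Ins j a b) = leaf_list a @ leaf_list b"

lemma leaves_eq_set_leaf_list: "leaves e = set (leaf_list e)"
  by (induction e) auto

lemma wval_cong: "\<forall>x\<in>leaves e. g x = h x \<Longrightarrow> wval g e = wval h e"
  by (induction e) auto

fun to_nform :: "('v \<Rightarrow> nat) \<Rightarrow> ('a, 'v) expr \<Rightarrow> ('a, 'v) nform" where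
  "to_nform \<rho> (Leaf x) = NApp x (replicate (\<rho> x) NSep)"
| "to_nform \<rho> (Word w) = NWord w"
| "to_nform \<rho> One = NSep"
| "to_nform \<rho> (Cat a b) = NCat (to_nform \<rho> a) (to_nform \<rho> b)"
| "to_nform \<rho> (Ins j a b) = nins j (to_nform \<rho> a) (to_nform \<rho> b)"

lemma sum_list_replicate_0: "sum_list (replicate n 0) = (0::'b::monoid_add)"
  by (induction n) auto

lemma nwf_nrank_nleaves_to_nform:
  "wf_expr \<rho> e \<Longrightarrow> nwf \<rho> (to_nform \<rho> e) \<and> nrank (to_nform \<rho> e) = rank \<rho> e \<and>
    nleaves (to_nform \<rho> e) = mset (leaf_list e)"
proof (induction e)
  case (Ins j a b)
  then show ?case by (auto simp: nwf_nins nrank_nins nleaves_nins)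
qed (auto simp: sum_list_replicate sum_list_replicate_0)

lemma nval_to_nform:
  assumes g: "\<forall>x. wrk (g x) = \<rho> x"
  shows "wf_expr \<rho> e \<Longrightarrow> nval g (to_nform \<rho> e) = wval g e"
proof (induction e)
  case (Leaf x)
  then show ?case by (simp add: fill_seps_replicate_sep)
next
  case (Ins j a b)
  then show ?case
    using nwf_nrank_nleaves_to_nform[of \<rho> a] nval_nins(1)[OF g, of "to_nform \<rho> a" j "to_nform \<rho> b"] by auto
qed auto

subsection \<open>Inserting the arguments of a nonterminal\<close>

text \<open>The position, among the separators still present, of slot i once the slots in D are filled.\<close>
definition slot_pos :: "nat \<Rightarrow> nat list \<Rightarrow> nat" where
  "slot_pos i D = Suc (length (filter (\<lambda>j. j \<notin> set D) [0..<i]))"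

fun fill_slots :: "('a, 'v) expr \<Rightarrow> ('a, 'v) expr list \<Rightarrow> nat list \<Rightarrow> nat list \<Rightarrow> ('a, 'v) expr" where
  "fill_slots cur es D [] = cur"
| "fill_slots cur es D (i # is) = fill_slots (Ins (slot_pos i D) cur (es ! i)) es (i # D) is"

definition filled_slots :: "'x list \<Rightarrow> nat list \<Rightarrow> 'x option list" where
  "filled_slots ss D = map (\<lambda>j. if j \<in> set D then Some (ss ! j) else None) [0..<length ss]"

lemma filled_slots_update:
  "i < length ss \<Longrightarrow> (filled_slots ss D)[i := Some (ss ! i)] = filled_slots ss (i # D)"
  by (rule nth_equalityI) (auto simp: filled_slots_def nth_list_update)

lemma take_filled_slots:
  "i \<le> length ss \<Longrightarrow>
    take i (filled_slots ss D) = map (\<lambda>j. if j \<in> set D then Some (ss ! j) else None) [0..<i]"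
  by (simp add: filled_slots_def take_map)

lemma slot_pos_eq:
  "i \<le> length ss \<Longrightarrow>
    slot_pos i D = Suc (length (filter (\<lambda>x. x = None) (take i (filled_slots ss D))))"
  by (simp add: take_filled_slots slot_pos_def filter_map comp_def)

lemma wval_fill_slots:
  assumes es: "length es = length ss" "\<forall>j<length ss. wval g (es ! j) = ss ! j"
    and w: "length ss = wrk w"
  shows "wval g cur = fill_seps w (filled_slots ss D) \<Longrightarrow> set is \<subseteq> {..<length ss} \<Longrightarrow>
    distinct is \<Longrightarrow> set is \<inter> set D = {} \<Longrightarrow>
    \<forall>n<length is. \<forall>j. (j \<in> set D \<or> j \<in> set (take n is)) \<longrightarrow> j < is ! n \<longrightarrow> wrk (ss ! j) = 0 \<Longrightarrow>
    wval g (fill_slots cur es D is) = fill_seps w (filled_slots ss (rev is @ D))"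
proof (induction "is" arbitrary: cur D)
  case (Cons i "is")
  have il: "i < length ss" and iD: "i \<notin> set D"
    using Cons.prems by auto
  have "intercal (Suc (length (filter (\<lambda>x. x = None) (take i (filled_slots ss D)))))
      (fill_seps w (filled_slots ss D)) (ss ! i) = fill_seps w ((filled_slots ss D)[i := Some (ss ! i)])"
  proof (rule intercal_fill_seps_slot)
    have "\<forall>j. j \<in> set D \<longrightarrow> j < i \<longrightarrow> wrk (ss ! j) = 0"
      using Cons.prems(5) by force
    then show "\<forall>s. Some s \<in> set (take i (filled_slots ss D)) \<longrightarrow> wrk s = 0"
      using il by (auto simp: take_filled_slots split: if_splits)
  qed (use w il iD in \<open>auto simp: filled_slots_def\<close>)
  then have step: "wval g (Ins (slot_pos i D) cur (es ! i)) = fill_seps w (filled_slots ss (i # D))"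
    using Cons.prems(1) es il slot_pos_eq[of i ss D] by (simp add: filled_slots_update)
  have "wval g (fill_slots (Ins (slot_pos i D) cur (es ! i)) es (i # D) is) =
      fill_seps w (filled_slots ss (rev is @ i # D))"
  proof (rule Cons.IH[OF step])
    show "\<forall>n<length is. \<forall>j. (j \<in> set (i # D) \<or> j \<in> set (take n is)) \<longrightarrow> j < is ! n \<longrightarrow> wrk (ss ! j) = 0"
    proof (intro allI impI)
      fix n j
      assume n: "n < length is" and "j \<in> set (i # D) \<or> j \<in> set (take n is)" and "j < is ! n"
      then have "j \<in> set D \<or> j \<in> set (take (Suc n) (i # is))" "j < (i # is) ! Suc n"
        by auto
      then show "wrk (ss ! j) = 0"
        using Cons.prems(5) n by (metis Suc_less_eq length_Cons)
    qed
  qed (use Cons.prems in auto)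
  then show ?case by simp
qed simp

text \<open>The rank of a nonterminal of rank \<open>length hs\<close> whose slots in S are filled by arguments of
  ranks \<open>hs\<close>.\<close>
definition partial_rank :: "nat list \<Rightarrow> nat set \<Rightarrow> nat" where
  "partial_rank hs S = card ({..<length hs} - S) + (\<Sum>j\<in>S. hs ! j)"

lemma partial_rank_all: "partial_rank hs {..<length hs} = sum_list hs"
  by (simp add: partial_rank_def sum_list_sum_nth atLeast0LessThan)

lemma partial_rank_insert:
  assumes "i < length hs" "i \<notin> S" "finite S"
  shows "partial_rank hs (insert i S) = partial_rank hs S + hs ! i - 1"
proof -
  have "i \<in> {..<length hs} - S" using assms by simp
  then have "card ({..<length hs} - S) \<ge> 1"
    by (metis One_nat_def Suc_leI card_gt_0_iff empty_iff finite_Diff finite_lessThan)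
  moreover have "{..<length hs} - insert i S = ({..<length hs} - S) - {i}" by auto
  ultimately show ?thesis
    using assms by (simp add: partial_rank_def card_Diff_singleton)
qed

lemma slot_pos_le: "i < L \<Longrightarrow> i \<notin> set D \<Longrightarrow> slot_pos i D \<le> card ({..<L} - set D)"
proof -
  assume i: "i < L" "i \<notin> set D"
  have "length (filter (\<lambda>j. j \<notin> set D) [0..<i]) = card {j. j < i \<and> j \<notin> set D}"
    by (simp add: length_filter_conv_card) (metis (no_types, lifting) add_0 nth_upt)
  moreover have "card (insert i {j. j < i \<and> j \<notin> set D}) \<le> card ({..<L} - set D)"
    by (rule card_mono) (use i in auto)
  ultimately show ?thesis by (simp add: slot_pos_def)
qed

lemma k_correct_simps [simp]:
  "k_correct k \<rho> (Leaf x) \<longleftrightarrow> \<rho> x \<le> k"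
  "k_correct k \<rho> (Word w)"
  "k_correct k \<rho> One \<longleftrightarrow> 1 \<le> k"
  "k_correct k \<rho> (Cat a b) \<longleftrightarrow> rank \<rho> (Cat a b) \<le> k \<and> k_correct k \<rho> a \<and> k_correct k \<rho> b"
  "k_correct k \<rho> (Ins j a b) \<longleftrightarrow> rank \<rho> (Ins j a b) \<le> k \<and> k_correct k \<rho> a \<and> k_correct k \<rho> b"
  by (auto simp: k_correct_def)

lemma fill_slots_k_correct:
  assumes es: "length es = length hs"
    "\<forall>j<length hs. wf_expr \<rho> (es ! j) \<and> rank \<rho> (es ! j) = hs ! j \<and> k_correct k \<rho> (es ! j)"
  shows "wf_expr \<rho> cur \<Longrightarrow> rank \<rho> cur = partial_rank hs (set D) \<Longrightarrow> k_correct k \<rho> cur \<Longrightarrow>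
    set is \<subseteq> {..<length hs} \<Longrightarrow> distinct is \<Longrightarrow> set is \<inter> set D = {} \<Longrightarrow>
    \<forall>m\<le>length is. partial_rank hs (set (take m is) \<union> set D) \<le> k \<Longrightarrow>
    wf_expr \<rho> (fill_slots cur es D is) \<and>
    rank \<rho> (fill_slots cur es D is) = partial_rank hs (set is \<union> set D) \<and>
    k_correct k \<rho> (fill_slots cur es D is)"
proof (induction "is" arbitrary: cur D)
  case (Cons i "is")
  have il: "i < length hs" and iD: "i \<notin> set D"
    using Cons.prems by auto
  define cur' where "cur' = Ins (slot_pos i D) cur (es ! i)"
  have "1 \<le> slot_pos i D" by (simp add: slot_pos_def)
  moreover have "slot_pos i D \<le> rank \<rho> cur"
    using slot_pos_le[OF il iD] Cons.prems(2) by (simp add: partial_rank_def)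
  ultimately have wf': "wf_expr \<rho> cur'"
    using Cons.prems(1) es il by (simp add: cur'_def)
  have rk': "rank \<rho> cur' = partial_rank hs (set (i # D))"
    using partial_rank_insert[OF il iD] Cons.prems(2) es il by (simp add: cur'_def)
  have "partial_rank hs (set (i # D)) \<le> k"
    using Cons.prems(7)[rule_format, of 1] by simp
  then have cor': "k_correct k \<rho> cur'"
    using rk' Cons.prems(3) es il by (simp add: cur'_def)
  have "wf_expr \<rho> (fill_slots cur' es (i # D) is) \<and>
    rank \<rho> (fill_slots cur' es (i # D) is) = partial_rank hs (set is \<union> set (i # D)) \<and>
    k_correct k \<rho> (fill_slots cur' es (i # D) is)"
  proof (rule Cons.IH[OF wf' rk' cor'])
    show "\<forall>m\<le>length is. partial_rank hs (set (take m is) \<union> set (i # D)) \<le> k"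
      using Cons.prems(7) by (auto simp: insert_commute dest: spec[of _ "Suc _"])
  qed (use Cons.prems in auto)
  then show ?case by (simp add: cur'_def insert_commute)
qed simp

lemma mset_leaf_list_fill_slots:
  "mset (leaf_list (fill_slots cur es D is)) =
    mset (leaf_list cur) + sum_list (map (\<lambda>i. mset (leaf_list (es ! i))) is)"
  by (induction "is" arbitrary: cur D) auto

definition fill_order :: "nat list \<Rightarrow> nat list" where
  "fill_order hs = filter (\<lambda>i. hs ! i = 0) [0..<length hs] @
    rev (filter (\<lambda>i. hs ! i \<noteq> 0) [0..<length hs])"

lemma fill_order_set: "distinct (fill_order hs)" "set (fill_order hs) = {..<length hs}"
  by (auto simp: fill_order_def)

lemma partial_rank_fill_order_le:
  "partial_rank hs (set (take m (fill_order hs))) \<le> max (length hs) (sum_list hs)"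
proof -
  define Z where "Z = filter (\<lambda>i. hs ! i = 0) [0..<length hs]"
  define S where "S = set (take m (fill_order hs))"
  define A where "A = {..<length hs}"
  have SA: "S \<subseteq> A"
    unfolding S_def A_def using fill_order_set(2)[of hs] by (metis set_take_subset)
  show ?thesis
  proof (cases "m \<le> length Z")
    case True
    then have "S \<subseteq> set Z"
      by (simp add: S_def fill_order_def Z_def[symmetric] set_take_subset)
    then have "(\<Sum>j\<in>S. hs ! j) = 0"
      by (intro sum.neutral) (auto simp: Z_def)
    moreover have "card (A - S) \<le> length hs"
      by (metis A_def card_lessThan card_mono Diff_subset finite_lessThan)
    ultimately show ?thesis by (simp add: partial_rank_def A_def[symmetric] S_def[symmetric])
  next
    case False
    then have "set Z \<subseteq> S"
      by (simp add: S_def fill_order_def Z_def[symmetric])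
    then have "\<forall>j\<in>A - S. 1 \<le> hs ! j"
      by (auto simp: Z_def A_def)
    then have "card (A - S) \<le> (\<Sum>j\<in>A - S. hs ! j)"
      using sum_mono[of "A - S" "\<lambda>_. 1::nat"] by simp
    then have "partial_rank hs S \<le> (\<Sum>j\<in>A - S. hs ! j) + (\<Sum>j\<in>S. hs ! j)"
      by (simp add: partial_rank_def A_def[symmetric])
    also have "\<dots> = (\<Sum>j\<in>A. hs ! j)"
      using SA by (metis A_def finite_lessThan sum.subset_diff)
    also have "\<dots> = sum_list hs"
      by (simp add: A_def sum_list_sum_nth atLeast0LessThan)
    finally show ?thesis by (simp add: S_def)
  qed
qed

lemma fill_order_earlier_smaller_zero:
  assumes "n < length (fill_order hs)" "j \<in> set (take n (fill_order hs))" "j < fill_order hs ! n"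
  shows "hs ! j = 0"
proof (rule ccontr)
  assume nz: "hs ! j \<noteq> 0"
  define Z where "Z = filter (\<lambda>i. hs ! i = 0) [0..<length hs]"
  define P where "P = filter (\<lambda>i. hs ! i \<noteq> 0) [0..<length hs]"
  have L: "fill_order hs = Z @ rev P"
    by (simp add: fill_order_def Z_def P_def)
  have jZ: "j \<notin> set Z" using nz by (simp add: Z_def)
  have nZ: "\<not> n \<le> length Z"
  proof
    assume "n \<le> length Z"
    then have "set (take n (fill_order hs)) \<subseteq> set Z" by (simp add: L set_take_subset)
    then show False using assms(2) jZ by auto
  qed
  then have "j \<in> set (take (n - length Z) (rev P))"
    using assms(2) jZ by (simp add: L)
  then obtain a where a: "a < n - length Z" "a < length (rev P)" "rev P ! a = j"
    by (auto simp: in_set_conv_nth)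
  have nl: "n - length Z < length (rev P)" using assms(1) nZ by (simp add: L)
  have ln: "fill_order hs ! n = rev P ! (n - length Z)" using nZ by (simp add: L nth_append)
  have "sorted_wrt (<) P"
    unfolding P_def by (intro sorted_wrt_filter) (simp add: sorted_wrt_upt)
  then have "sorted_wrt (>) (rev P)" by (simp add: sorted_wrt_rev)
  then have "rev P ! a > rev P ! (n - length Z)" using a nl sorted_wrt_nth_less by fastforce
  then show False using assms(3) a ln by simp
qed

subsection \<open>From normal forms back to terms\<close>

fun of_nform :: "('a, 'v) nform \<Rightarrow> ('a, 'v) expr" where
  "of_nform (NWord w) = Word w"
| "of_nform NSep = One"
| "of_nform (NCat a b) = Cat (of_nform a) (of_nform b)"
| "of_nform (NApp x cs) = fill_slots (Leaf x) (map of_nform cs) [] (fill_order (map nrank cs))"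

lemma mset_sum_list_member: "c \<in> set cs \<Longrightarrow> x \<in># f c \<Longrightarrow> x \<in># sum_list (map f cs)"
  by (induction cs) auto

lemma of_nform_k_correct:
  "nwf \<rho> n \<Longrightarrow> nrank n \<le> k \<Longrightarrow> \<forall>x\<in>#nleaves n. \<rho> x \<le> k \<Longrightarrow>
   wf_expr \<rho> (of_nform n) \<and> rank \<rho> (of_nform n) = nrank n \<and> k_correct k \<rho> (of_nform n)"
proof (induction n)
  case (NApp x cs)
  define hs where "hs = map nrank cs"
  define es where "es = map of_nform cs"
  have len: "length cs = \<rho> x" and xk: "\<rho> x \<le> k"
    using NApp.prems by auto
  have args: "\<forall>j<length hs. wf_expr \<rho> (es ! j) \<and> rank \<rho> (es ! j) = hs ! j \<and> k_correct k \<rho> (es ! j)"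
  proof (intro allI impI)
    fix j assume j: "j < length hs"
    then have c: "cs ! j \<in> set cs" by (simp add: hs_def)
    then have "nrank (cs ! j) \<le> sum_list (map nrank cs)" by (simp add: member_le_sum_list)
    then have "nrank (cs ! j) \<le> k" using NApp.prems by simp
    moreover have "\<forall>y\<in>#nleaves (cs ! j). \<rho> y \<le> k"
      using NApp.prems c mset_sum_list_member[of _ cs _ nleaves] by auto
    moreover have "nwf \<rho> (cs ! j)" using NApp.prems c by simp
    ultimately show "wf_expr \<rho> (es ! j) \<and> rank \<rho> (es ! j) = hs ! j \<and> k_correct k \<rho> (es ! j)"
      using NApp.IH[OF c] j by (simp add: es_def hs_def)
  qed
  have "wf_expr \<rho> (fill_slots (Leaf x) es [] (fill_order hs)) \<and>
    rank \<rho> (fill_slots (Leaf x) es [] (fill_order hs)) = partial_rank hs (set (fill_order hs) \<union> set []) \<and>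
    k_correct k \<rho> (fill_slots (Leaf x) es [] (fill_order hs))"
  proof (rule fill_slots_k_correct[OF _ args])
    show "rank \<rho> (Leaf x) = partial_rank hs (set [])"
      using len by (simp add: partial_rank_def hs_def)
    show "\<forall>m\<le>length (fill_order hs). partial_rank hs (set (take m (fill_order hs)) \<union> set []) \<le> k"
      using partial_rank_fill_order_le[of hs] xk len NApp.prems(2)
      by (simp add: hs_def) (meson le_trans max.bounded_iff)
  qed (use xk fill_order_set in \<open>auto simp: es_def hs_def\<close>)
  moreover have "partial_rank hs (set (fill_order hs) \<union> set []) = nrank (NApp x cs)"
    using fill_order_set(2)[of hs] partial_rank_all[of hs] by (simp add: hs_def)
  ultimately show ?case by (simp add: es_def hs_def)
qed auto

lemma wval_of_nform:
  assumes g: "\<forall>x. wrk (g x) = \<rho> x"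
  shows "nwf \<rho> n \<Longrightarrow> wval g (of_nform n) = nval g n"
proof (induction n)
  case (NApp x cs)
  define hs where "hs = map nrank cs"
  define es where "es = map of_nform cs"
  define ss where "ss = map (nval g) cs"
  have wk: "\<forall>j<length ss. wrk (ss ! j) = hs ! j"
    using NApp.prems wrk_nval[OF g] by (auto simp: ss_def hs_def)
  have "wval g (fill_slots (Leaf x) es [] (fill_order hs)) =
      fill_seps (g x) (filled_slots ss (rev (fill_order hs) @ []))"
  proof (rule wval_fill_slots)
    show "length ss = wrk (g x)" using NApp.prems g by (simp add: ss_def)
    have "filled_slots ss [] = replicate (length ss) None"
      by (simp add: filled_slots_def map_replicate_const)
    then show "wval g (Leaf x) = fill_seps (g x) (filled_slots ss [])"
      by (simp add: fill_seps_replicate_None)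
    show "\<forall>n<length (fill_order hs). \<forall>j. (j \<in> set [] \<or> j \<in> set (take n (fill_order hs))) \<longrightarrow>
        j < fill_order hs ! n \<longrightarrow> wrk (ss ! j) = 0"
    proof (intro allI impI)
      fix n j
      assume n: "n < length (fill_order hs)" and "j \<in> set [] \<or> j \<in> set (take n (fill_order hs))"
        and jl: "j < fill_order hs ! n"
      then have jin: "j \<in> set (take n (fill_order hs))" by simp
      then have "j < length ss"
        using fill_order_set(2)[of hs] set_take_subset[of n "fill_order hs"] by (auto simp: ss_def hs_def)
      then show "wrk (ss ! j) = 0"
        using wk fill_order_earlier_smaller_zero[OF n jin jl] by simp
    qed
  qed (use NApp fill_order_set[of hs] in \<open>auto simp: es_def ss_def hs_def\<close>)
  moreover have "filled_slots ss (rev (fill_order hs) @ []) = map Some ss"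
    using fill_order_set(2)[of hs] by (intro nth_equalityI) (auto simp: filled_slots_def ss_def hs_def)
  ultimately show ?case
    by (simp only: of_nform.simps nval_NApp es_def[symmetric] hs_def[symmetric] ss_def[symmetric])
qed auto

lemma mset_leaf_list_of_nform: "mset (leaf_list (of_nform n)) = nleaves n"
proof (induction n)
  case (NApp x cs)
  define f where "f = (\<lambda>i. mset (leaf_list (map of_nform cs ! i)))"
  have "sum_list (map f (fill_order (map nrank cs))) = sum f (set (fill_order (map nrank cs)))"
    using fill_order_set(1) by (simp add: sum_list_distinct_conv_sum_set)
  also have "\<dots> = (\<Sum>i<length cs. f i)"
    using fill_order_set(2) by simp
  also have "\<dots> = sum_list (map nleaves cs)"
    using NApp by (simp add: sum_list_sum_nth atLeast0LessThan f_def)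
  finally show ?case by (simp add: mset_leaf_list_fill_slots f_def)
qed auto

theorem exists_k_correct_wval_equiv:
  fixes \<rho> :: "'v \<Rightarrow> nat" and e :: "('a, 'v) expr"
  assumes "wf_expr \<rho> e" "rank \<rho> e \<le> k" "\<forall>x\<in>leaves e. \<rho> x \<le> k"
  shows "\<exists>e'. wf_expr \<rho> e' \<and> k_correct k \<rho> e' \<and> mset (leaf_list e') = mset (leaf_list e) \<and>
    (\<forall>g. (\<forall>x. wrk (g x) = \<rho> x) \<longrightarrow> wval g e' = wval g e)"
proof (intro exI conjI allI impI)
  note n = nwf_nrank_nleaves_to_nform[OF assms(1)]
  have "\<forall>x\<in>#nleaves (to_nform \<rho> e). \<rho> x \<le> k"
    using n assms(3) by (simp add: leaves_eq_set_leaf_list)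
  then have "wf_expr \<rho> (of_nform (to_nform \<rho> e)) \<and> k_correct k \<rho> (of_nform (to_nform \<rho> e))"
    using of_nform_k_correct[of \<rho> "to_nform \<rho> e" k] n assms(2) by simp
  then show "wf_expr \<rho> (of_nform (to_nform \<rho> e))" "k_correct k \<rho> (of_nform (to_nform \<rho> e))"
    by simp_all
  show "mset (leaf_list (of_nform (to_nform \<rho> e))) = mset (leaf_list e)"
    using n by (simp add: mset_leaf_list_of_nform)
  fix g :: "'v \<Rightarrow> 'a option list"
  assume g: "\<forall>x. wrk (g x) = \<rho> x"
  then show "wval g (of_nform (to_nform \<rho> e)) = wval g e"
    using n wval_of_nform[OF g] nval_to_nform[OF g assms(1)] by simp
qed

subsection \<open>Linear multicontexts\<close>

lemma set_of_binary_wval: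
  assumes A: "A = {wval g a | g. \<forall>x\<in>leaves a. g x \<in> \<mu> x}"
    and B: "B = {wval g b | g. \<forall>x\<in>leaves b. g x \<in> \<mu> x}"
    and disj: "leaves a \<inter> leaves b = {}"
    and c: "\<And>g. wval g c = F (wval g a) (wval g b)" and lc: "leaves c = leaves a \<union> leaves b"
  shows "{F u v | u v. u \<in> A \<and> v \<in> B} = {wval g c | g. \<forall>x\<in>leaves c. g x \<in> \<mu> x}"
proof
  show "{F u v | u v. u \<in> A \<and> v \<in> B} \<subseteq> {wval g c | g. \<forall>x\<in>leaves c. g x \<in> \<mu> x}"
  proof
    fix z assume "z \<in> {F u v | u v. u \<in> A \<and> v \<in> B}"
    then obtain g1 g2 where z: "z = F (wval g1 a) (wval g2 b)"
      and g1: "\<forall>x\<in>leaves a. g1 x \<in> \<mu> x" and g2: "\<forall>x\<in>leaves b. g2 x \<in> \<mu> x"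
      using A B by blast
    define g where "g = (\<lambda>x. if x \<in> leaves a then g1 x else g2 x)"
    have "wval g a = wval g1 a" by (rule wval_cong) (simp add: g_def)
    moreover have "wval g b = wval g2 b" by (rule wval_cong) (use disj in \<open>auto simp: g_def\<close>)
    moreover have "\<forall>x\<in>leaves c. g x \<in> \<mu> x" using g1 g2 lc by (auto simp: g_def)
    ultimately show "z \<in> {wval g c | g. \<forall>x\<in>leaves c. g x \<in> \<mu> x}" using z c by force
  qed
qed (use A B c lc in blast)

lemma val_eq_wval_image:
  "distinct (leaf_list e) \<Longrightarrow> val \<mu> e = {wval g e | g. \<forall>x\<in>leaves e. g x \<in> \<mu> x}"
proof (induction e)
  case (Leaf x)
  show ?case
  proof
    show "val \<mu> (Leaf x) \<subseteq> {wval g (Leaf x) | g. \<forall>x\<in>leaves (Leaf x). g x \<in> \<mu> x}"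
    proof
      fix y assume "y \<in> val \<mu> (Leaf x)"
      then show "y \<in> {wval g (Leaf x) | g. \<forall>x\<in>leaves (Leaf x). g x \<in> \<mu> x}"
        by (intro CollectI exI[of _ "\<lambda>_. y"]) simp
    qed
  qed auto
next
  case (Cat a b)
  then show ?case unfolding val.simps set_concat_def
    by (intro set_of_binary_wval) (auto simp: leaves_eq_set_leaf_list)
next
  case (Ins j a b)
  then show ?case unfolding val.simps set_intercal_def
    by (intro set_of_binary_wval) (auto simp: leaves_eq_set_leaf_list)
qed auto

lemma mc_equiv_if_wval_eq:
  assumes dist: "distinct (leaf_list D1)" and ms: "mset (leaf_list D2) = mset (leaf_list D1)"
    and eq: "\<And>g. \<forall>x. wrk (g x) = \<rho>V x \<Longrightarrow> wval g D1 = wval g D2"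
  shows "mc_equiv \<rho>V D1 D2"
  unfolding mc_equiv_def
proof (intro allI impI)
  fix \<mu> :: "nat \<Rightarrow> 'a option list set"
  assume \<mu>: "\<forall>x. \<forall>w\<in>\<mu> x. wrk w = \<rho>V x"
  have lv: "leaves D2 = leaves D1"
    by (metis leaves_eq_set_leaf_list ms set_mset_mset)
  have "wval g D1 = wval g D2" if g: "\<forall>x\<in>leaves D1. g x \<in> \<mu> x" for g
  proof -
    define g' where "g' = (\<lambda>x. if x \<in> leaves D1 then g x else replicate (\<rho>V x) None)"
    have "\<forall>x. wrk (g' x) = \<rho>V x"
      using \<mu> g by (auto simp: g'_def)
    then have "wval g' D1 = wval g' D2" by (rule eq)
    moreover have "wval g' D1 = wval g D1" by (rule wval_cong) (simp add: g'_def)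
    moreover have "wval g' D2 = wval g D2" by (rule wval_cong) (simp add: g'_def lv)
    ultimately show ?thesis by simp
  qed
  then have "{wval g D1 | g. \<forall>x\<in>leaves D1. g x \<in> \<mu> x} = {wval g D2 | g. \<forall>x\<in>leaves D2. g x \<in> \<mu> x}"
    using lv by metis
  moreover have "distinct (leaf_list D2)"
    using ms dist mset_eq_imp_distinct_iff by blast
  ultimately show "val \<mu> D1 = val \<mu> D2"
    using val_eq_wval_image[OF dist] val_eq_wval_image[of D2] by simp
qed

lemma rank_subst: "rank \<rho> (subst \<sigma> D) = rank (\<lambda>i. \<rho> (\<sigma> i)) D"
  by (induction D) auto

lemma wf_expr_subst: "wf_expr \<rho> (subst \<sigma> D) = wf_expr (\<lambda>i. \<rho> (\<sigma> i)) D"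
  by (induction D) (auto simp: rank_subst)

lemma k_correct_subst: "k_correct k \<rho> (subst \<sigma> D) = k_correct k (\<lambda>i. \<rho> (\<sigma> i)) D"
  by (induction D) (auto simp: rank_subst)

fun number_leaves :: "nat \<Rightarrow> ('a, 'v) expr \<Rightarrow> ('a, nat) expr" where
  "number_leaves n (Leaf x) = Leaf n"
| "number_leaves n (Word w) = Word w"
| "number_leaves n One = One"
| "number_leaves n (Cat a b) = Cat (number_leaves n a) (number_leaves (n + length (leaf_list a)) b)"
| "number_leaves n (Ins j a b) = Ins j (number_leaves n a) (number_leaves (n + length (leaf_list a)) b)"

lemma leaf_list_number_leaves: "leaf_list (number_leaves n e) = [n..<n + length (leaf_list e)]"
proof (induction e arbitrary: n)
  case (Cat a b)
  then show ?case
    using upt_add_eq_append[of n "n + length (leaf_list a)" "length (leaf_list b)"] by (simp add: add.assoc)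
next
  case (Ins j a b)
  then show ?case
    using upt_add_eq_append[of n "n + length (leaf_list a)" "length (leaf_list b)"] by (simp add: add.assoc)
qed auto

lemma subst_number_leaves:
  "\<forall>i<length (leaf_list e). \<sigma> (n + i) = leaf_list e ! i \<Longrightarrow> subst \<sigma> (number_leaves n e) = e"
proof (induction e arbitrary: n)
  case (Cat a b)
  then show ?case
    by (auto simp: nth_append add.assoc intro!: Cat.IH dest: spec[of _ "length (leaf_list a) + _"])
next
  case (Ins j a b)
  then show ?case
    by (auto simp: nth_append add.assoc intro!: Ins.IH dest: spec[of _ "length (leaf_list a) + _"])
qed auto

lemma linear_multicontext_exists:
  fixes \<alpha> :: "('a, 'n) expr"
  obtains As and D :: "('a, nat) expr"
  where "subst (\<lambda>i. As ! i) D = \<alpha>" "leaf_list D = [0..<length As]" "set As = leaves \<alpha>"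
  by (rule that[of "leaf_list \<alpha>" "number_leaves 0 \<alpha>"])
    (simp_all add: subst_number_leaves leaf_list_number_leaves leaves_eq_set_leaf_list)

lemma term_equiv_subst_if_wval_eq:
  assumes D: "leaf_list D = [0..<length As]" and D': "mset (leaf_list D') = mset (leaf_list D)"
    and wf: "wf_expr (\<lambda>i. \<rho> (As ! i)) D" "wf_expr (\<lambda>i. \<rho> (As ! i)) D'"
    and eq: "\<And>g. \<forall>x. wrk (g x) = \<rho> (As ! x) \<Longrightarrow> wval g D = wval g D'"
  shows "term_equiv \<rho> (subst (\<lambda>i. As ! i) D) (subst (\<lambda>i. As ! i) D')"
proof -
  have "mc_equiv (\<lambda>i. \<rho> (As ! i)) D D'"
    using D D' eq by (intro mc_equiv_if_wval_eq) auto
  moreover have "set (leaf_list D') = set (leaf_list D)"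
    using D' by (metis set_mset_mset)
  then have "leaves D = {..<length As}" "leaves D' = {..<length As}"
    using D by (simp_all add: leaves_eq_set_leaf_list atLeast0LessThan)
  ultimately show ?thesis
    unfolding term_equiv_def using wf by blast
qed

theorem corollary1:
  fixes k :: nat and \<rho> :: "'n \<Rightarrow> nat" and \<alpha> :: "('a::finite, 'n) expr"
  assumes "wf_expr \<rho> \<alpha>" and "k_essential k \<rho> \<alpha>"
  shows "\<exists>\<alpha>'. wf_expr \<rho> \<alpha>' \<and> k_correct k \<rho> \<alpha>' \<and> term_equiv \<rho> \<alpha> \<alpha>'"
proof -
  obtain As D where D: "subst (\<lambda>i. As ! i) D = \<alpha>" "leaf_list D = [0..<length As]" "set As = leaves \<alpha>"
    by (rule linear_multicontext_exists)
  define \<rho>V where "\<rho>V = (\<lambda>i. \<rho> (As ! i))"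
  have wf: "wf_expr \<rho>V D" and rk: "rank \<rho>V D = rank \<rho> \<alpha>"
    using assms(1) D(1) wf_expr_subst[of \<rho> _ D] rank_subst[of \<rho> _ D] by (auto simp: \<rho>V_def)
  have "\<forall>x\<in>leaves D. \<rho>V x \<le> k"
    using assms(2) D(2,3) nth_mem[of _ As]
    by (auto simp: k_essential_def \<rho>V_def leaves_eq_set_leaf_list less_imp_le)
  then obtain D' where D': "wf_expr \<rho>V D'" "k_correct k \<rho>V D'"
    "mset (leaf_list D') = mset (leaf_list D)" "\<forall>g. (\<forall>x. wrk (g x) = \<rho>V x) \<longrightarrow> wval g D' = wval g D"
    using exists_k_correct_wval_equiv[OF wf, of k] rk assms(2) by (auto simp: k_essential_def)
  have "term_equiv \<rho> \<alpha> (subst (\<lambda>i. As ! i) D')"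
    using term_equiv_subst_if_wval_eq[OF D(2) D'(3)] wf D' D(1) by (simp add: \<rho>V_def)
  moreover have "wf_expr \<rho> (subst (\<lambda>i. As ! i) D')" "k_correct k \<rho> (subst (\<lambda>i. As ! i) D')"
    using D'(1,2) by (simp_all add: wf_expr_subst k_correct_subst \<rho>V_def)
  ultimately show ?thesis by blast
qed

end
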